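(* Consider $n$ processes running the Median-based Byzantine Agreement algorithm (described in the context) with parameter $\alpha$, where $\alpha < \lceil n/6 \rceil - 1$, in a system with fewer than $\lfloor n/3 \rfloor$ Byzantine processes and fewer than $\alpha$ processes subject to malicious transient faults. Then (consistency) all non-faulty processes output the same value $d$, and (interval validity) $d \in \{\min T,\dots,\max T\}$, where $T$ is the multiset of inputs of the non-faulty processes.
   Context: System model: $n$ processes $p_1,\dots,p_n$ communicate over a complete network in fully synchronous rounds (every message sent in a round is delivered before the next round); the receiver of a message knows its sender. A Byzantine process may deviate arbitrarily from the protocol, e.g. send different messages to different processes or omit messages. A malicious transient fault at a non-Byzantine process replaces its value (input) by an arbitrary, possibly adversarially chosen value (possibly $\bot$) at the start of the execution; afterwards the process follows the algorithm (so it sends the same value to everyone). A process is non-faulty if it is neither Byzantine nor subject to a transient fault. Each process $p_i$ has an input value $v_i$ from a totally ordered domain $V$ (integers); $\bot\notin V$ is a special default value. WeakMVBA: a Byzantine agreement protocol (tolerating the given number of Byzantine processes) in which each process has an input and all non-faulty processes terminate with: (consistency) the same decision value; (weak validity) if all non-faulty processes have the same input $v$, the decision is $v$; otherwise the decision is some value of $V\cup\{\bot\}$. Median-based Byzantine Agreement algorithm with parameter $\alpha \ge 0$, run by a process with input $v$: (1) send $v$ to all processes (including itself); initialize an array $A[1..n]$ to $\bot$ and set $A[i]$ to the value received from $p_i$. (2) For each $i=1,\dots,n$, in parallel, run an instance of WeakMVBA in which this process uses input $A[i]$, and replace $A[i]$ by the decision of that instance. (3) Output select\_value$(A)$, defined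 as: delete all $\bot$ entries of $A$ to obtain a list $A_{\not\bot}$ of length $k$; let $C[u]$ be the number of occurrences of $u$ in $A_{\not\bot}$ and let $m$ be a value maximizing $C[m]$ (ties broken by a fixed deterministic rule); if $C[m] \ge \lfloor k/3\rfloor + 1 + \alpha$, output $m$; otherwise sort $A_{\not\bot}$ in nondecreasing order and output its median element (the entry at position $\lfloor k/2 \rfloor$; for even $k$ the lower of the two middle values). *)

theory Defs
  imports Complex_Main
begin

text \<open>Processes are indexed by 0..<n. The default value bottom is None; V = int.\<close>

definition not_bot :: "int option list \<Rightarrow> int list" where
  "not_bot A = [the x. x \<leftarrow> A, x \<noteq> None]"

definition mode_rule :: "(int option list \<Rightarrow> int) \<Rightarrow> bool" where
  "mode_rule tb \<longleftrightarrow> (\<forall>A. not_bot A \<noteq> [] \<longrightarrow>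
      tb A \<in> set (not_bot A) \<and>
      (\<forall>y. count_list (not_bot A) y \<le> count_list (not_bot A) (tb A)))"

text \<open>select_value with parameter alpha; the median is the lower middle element
  of the sorted list (0-based position (k-1) div 2).\<close>
definition select_value :: "(int option list \<Rightarrow> int) \<Rightarrow> nat \<Rightarrow> int option list \<Rightarrow> int" where
  "select_value tb \<alpha> A =
     (let xs = not_bot A; k = length xs; m = tb A in
      if count_list xs m \<ge> k div 3 + 1 + \<alpha> then m
      else sort xs ! ((k - 1) div 2))"

end

theory Submission
  imports Defs
begin

text \<open>By consistency of the WeakMVBA instances all non-faulty processes decide the same array,
  and by weak validity this array holds the input of every non-faulty process at its index. Of
  its \<open>k\<close> non-bottom entries at most \<open>k - s\<close> are not such inputs, \<open>s\<close> being the number of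
  non-faulty processes. The bounds on the faults make \<open>k - s\<close> smaller than both the mode
  threshold \<open>k div 3 + 1 + \<alpha>\<close> and \<open>k / 2\<close>. Hence a value reaching the threshold lies in
  \<open>[min T, max T]\<close>, and fewer than half of the entries lie below \<open>min T\<close> (or above \<open>max T\<close>),
  which traps the median in the same interval.\<close>

lemma not_bot_eq_map_filter: "not_bot A = map the (filter (\<lambda>x. x \<noteq> None) A)"
  by (induct A) (auto simp: not_bot_def)

lemma length_not_bot_le: "length (not_bot A) \<le> length A"
  by (simp add: not_bot_eq_map_filter)

lemma length_filter_not_bot_add_card_le:
  assumes S: "S \<subseteq> {..<length A}" and entries: "\<forall>j\<in>S. \<exists>x. A ! j = Some x \<and> \<not> P x"
  shows "length (filter P (not_bot A)) + card S \<le> length (not_bot A)"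
proof -
  let ?J = "{j. j < length A \<and> A ! j \<noteq> None \<and> P (the (A ! j))}"
  let ?N = "{j. j < length A \<and> A ! j \<noteq> None}"
  have "length (filter P (not_bot A)) = card ?J"
    by (simp add: not_bot_eq_map_filter filter_map length_filter_conv_card o_def)
  moreover have "length (not_bot A) = card ?N"
    by (simp add: not_bot_eq_map_filter length_filter_conv_card)
  moreover have "card ?J + card S = card (?J \<union> S)"
    using entries S finite_subset by (intro card_Un_disjoint[symmetric]) auto
  moreover have "card (?J \<union> S) \<le> card ?N"
    using entries S by (intro card_mono) auto
  ultimately show ?thesis by simp
qed

lemma le_sort_nth:
  fixes xs :: "'a::linorder list"
  assumes "p < length xs" and "length (filter (\<lambda>x. x < a) xs) \<le> p"
  shows "a \<le> sort xs ! p"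
proof (rule ccontr)
  let ?ys = "sort xs"
  assume "\<not> a \<le> ?ys ! p"
  then have "\<forall>q\<le>p. ?ys ! q < a"
    using sorted_nth_mono[of ?ys _ p] assms(1) by force
  then have "{0..p} \<subseteq> {q. q < length ?ys \<and> ?ys ! q < a}"
    using assms(1) by auto
  then have "card {0..p} \<le> card {q. q < length ?ys \<and> ?ys ! q < a}"
    by (rule card_mono[rotated]) auto
  then have "p + 1 \<le> length (filter (\<lambda>x. x < a) ?ys)"
    by (simp add: length_filter_conv_card)
  then show False
    using assms(2) filter_sort[of "\<lambda>x. x < a" "\<lambda>x. x" xs] by simp
qed

lemma sort_nth_le:
  fixes xs :: "'a::linorder list"
  assumes "p < length xs" and "length (filter (\<lambda>x. a < x) xs) < length xs - p"
  shows "sort xs ! p \<le> a"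
proof (rule ccontr)
  let ?ys = "sort xs"
  assume "\<not> ?ys ! p \<le> a"
  then have "\<forall>q. p \<le> q \<and> q < length ?ys \<longrightarrow> a < ?ys ! q"
    using sorted_nth_mono[of ?ys p] by force
  then have "{p..<length ?ys} \<subseteq> {q. q < length ?ys \<and> a < ?ys ! q}"
    by auto
  then have "card {p..<length ?ys} \<le> card {q. q < length ?ys \<and> a < ?ys ! q}"
    by (rule card_mono[rotated]) auto
  then have "length xs - p \<le> length (filter (\<lambda>x. a < x) ?ys)"
    by (simp add: length_filter_conv_card)
  then show False
    using assms(2) filter_sort[of "\<lambda>x. a < x" "\<lambda>x. x" xs] by simp
qed

text \<open>No property of the tie-breaking rule is needed: a value reaching the mode threshold
  occurs more often than all entries outside \<open>S\<close> together, so it is one of the values in \<open>S\<close>.\<close>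

lemma select_value_between:
  assumes S: "S \<subseteq> {..<length A}"
    and entries: "\<forall>j\<in>S. \<exists>x. A ! j = Some x \<and> lo \<le> x \<and> x \<le> hi"
    and below_mode: "length (not_bot A) \<le> card S + length (not_bot A) div 3 + \<alpha>"
    and below_half: "length (not_bot A) < 2 * card S"
  shows "lo \<le> select_value tb \<alpha> A \<and> select_value tb \<alpha> A \<le> hi"
proof -
  let ?xs = "not_bot A"
  let ?k = "length ?xs"
  have outside_few: "length (filter P ?xs) + card S \<le> ?k" if "\<forall>x. lo \<le> x \<and> x \<le> hi \<longrightarrow> \<not> P x" for P
    using that entries by (intro length_filter_not_bot_add_card_le[OF S]) blast
  show ?thesis
  proof (cases "count_list ?xs (tb A) \<ge> ?k div 3 + 1 + \<alpha>")
    case True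
    then have "select_value tb \<alpha> A = tb A"
      by (simp add: select_value_def Let_def)
    moreover have "lo \<le> tb A \<and> tb A \<le> hi"
    proof (rule ccontr)
      assume "\<not> (lo \<le> tb A \<and> tb A \<le> hi)"
      then have "count_list ?xs (tb A) + card S \<le> ?k"
        unfolding count_list_eq_length_filter by (intro outside_few) auto
      then show False using True below_mode by linarith
    qed
    ultimately show ?thesis by simp
  next
    case False
    let ?p = "(?k - 1) div 2"
    have median: "select_value tb \<alpha> A = sort ?xs ! ?p"
      using False by (simp add: select_value_def Let_def)
    have "length (filter (\<lambda>x. x < lo) ?xs) + card S \<le> ?k"
      by (intro outside_few) auto
    then have "lo \<le> sort ?xs ! ?p"
      using below_half by (intro le_sort_nth) linarith+
    moreover have "length (filter (\<lambda>x. hi < x) ?xs) + card S \<le> ?k"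
      by (intro outside_few) auto
    then have "sort ?xs ! ?p \<le> hi"
      using below_half by (intro sort_nth_le) linarith+
    ultimately show ?thesis using median by simp
  qed
qed

lemma six_mul_add_le_of_less_ceiling:
  assumes "int a < \<lceil>real n / 6\<rceil> - 1"
  shows "6 * a + 7 \<le> n"
proof -
  have "int a + 2 \<le> \<lceil>real n / 6\<rceil>"
    using assms by linarith
  then have "real (a + 1) < real n / 6"
    unfolding le_ceiling_iff by simp
  then show ?thesis by linarith
qed

lemma card_atLeastLessThan_Diff_disjoint:
  assumes "B \<subseteq> {0..<n}" "T \<subseteq> {0..<n}" "B \<inter> T = {}"
  shows "card ({0..<n} - B - T) = n - card B - card T"
proof -
  have "card (B \<union> T) = card B + card T"
    using assms by (intro card_Un_disjoint) (auto simp: finite_subset)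
  moreover have "{0..<n} - B - T = {0..<n} - (B \<union> T)"
    by blast
  ultimately show ?thesis
    using assms by (simp add: card_Diff_subset finite_subset)
qed

lemma common_decision_array:
  assumes i0: "i0 \<in> C" and C: "C \<subseteq> {0..<n}"
    and agree: "\<forall>j<n. \<forall>i\<in>C. \<forall>i'\<in>C. dec i j = dec i' j"
    and valid: "\<forall>j\<in>C. \<forall>i\<in>C. dec i j = Some (v j)"
  shows "\<exists>A. length A = n \<and> (\<forall>i\<in>C. map (dec i) [0..<n] = A) \<and> (\<forall>j\<in>C. A ! j = Some (v j))"
proof (intro exI conjI ballI)
  show "length (map (dec i0) [0..<n]) = n"
    by simp
  show "map (dec i) [0..<n] = map (dec i0) [0..<n]" if "i \<in> C" for i
  proof (rule map_cong[OF refl])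
    fix j assume "j \<in> set [0..<n]"
    then have "j < n" by simp
    then show "dec i j = dec i0 j"
      using agree \<open>i \<in> C\<close> i0 by blast
  qed
  show "map (dec i0) [0..<n] ! j = Some (v j)" if "j \<in> C" for j
    using that valid i0 C by auto
qed

theorem theorem2:
  fixes n \<alpha> :: nat
    and Byz Trans :: "nat set"            \<comment> \<open>Byzantine / transiently faulty processes\<close>
    and v :: "nat \<Rightarrow> int"                \<comment> \<open>original inputs\<close>
    and w :: "nat \<Rightarrow> int option"         \<comment> \<open>corrupted values of transiently faulty processes\<close>
    and byz :: "nat \<Rightarrow> nat \<Rightarrow> int option" \<comment> \<open>byz i j: what Byzantine p_j sends to p_i in step 1\<close>
    and dec :: "nat \<Rightarrow> nat \<Rightarrow> int option" \<comment> \<open>dec i j: decision of p_i in WeakMVBA instance j\<close>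
    and tb :: "int option list \<Rightarrow> int"
  defines "NF \<equiv> {0..<n} - Byz - Trans"
    and "A0 \<equiv> \<lambda>i j. if j \<in> Byz then byz i j else if j \<in> Trans then w j else Some (v j)"
  assumes alpha: "int \<alpha> < \<lceil>real n / 6\<rceil> - 1"
    and byz_sub: "Byz \<subseteq> {0..<n}" and byz_card: "card Byz < n div 3"
    and trans_sub: "Trans \<subseteq> {0..<n}" and trans_card: "card Trans < \<alpha>"
    and disj: "Byz \<inter> Trans = {}"
    and tie: "mode_rule tb"
    and mvba_consistency: "\<forall>j<n. \<forall>i\<in>NF. \<forall>i'\<in>NF. dec i j = dec i' j"
    and mvba_validity: "\<forall>j<n. \<forall>x::int. (\<forall>i\<in>{0..<n} - Byz. A0 i j = Some x)
                          \<longrightarrow> (\<forall>i\<in>NF. dec i j = Some x)"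
  shows "\<exists>d. (\<forall>i\<in>NF. select_value tb \<alpha> (map (dec i) [0..<n]) = d)
            \<and> Min (v ` NF) \<le> d \<and> d \<le> Max (v ` NF)"
proof -
  have n_large: "6 * \<alpha> + 7 \<le> n"
    using alpha by (rule six_mul_add_le_of_less_ceiling)
  have card_NF: "card NF = n - card Byz - card Trans"
    unfolding NF_def using byz_sub trans_sub disj by (rule card_atLeastLessThan_Diff_disjoint)
  then obtain i0 where i0: "i0 \<in> NF"
    using n_large byz_card trans_card by fastforce
  have valid: "\<forall>j\<in>NF. \<forall>i\<in>NF. dec i j = Some (v j)"
  proof
    fix j assume j: "j \<in> NF"
    then have "\<forall>i\<in>{0..<n} - Byz. A0 i j = Some (v j)"
      unfolding A0_def NF_def by simp
    moreover have "j < n"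
      using j unfolding NF_def by simp
    ultimately show "\<forall>i\<in>NF. dec i j = Some (v j)"
      using mvba_validity by blast
  qed
  obtain A where "length A = n" and same_array: "\<forall>i\<in>NF. map (dec i) [0..<n] = A"
    and entries: "\<forall>j\<in>NF. A ! j = Some (v j)"
    using common_decision_array[OF i0 _ mvba_consistency valid] unfolding NF_def by blast
  have "finite NF"
    unfolding NF_def by simp
  then have inputs: "\<forall>j\<in>NF. \<exists>x. A ! j = Some x \<and> Min (v ` NF) \<le> x \<and> x \<le> Max (v ` NF)"
    using entries by simp
  have "length (not_bot A) \<le> n"
    using length_not_bot_le[of A] \<open>length A = n\<close> by simp
  then have "length (not_bot A) \<le> card NF + length (not_bot A) div 3 + \<alpha>"
    and "length (not_bot A) < 2 * card NF"
    using byz_card trans_card n_large card_NF by linarith+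
  then have "Min (v ` NF) \<le> select_value tb \<alpha> A \<and> select_value tb \<alpha> A \<le> Max (v ` NF)"
    using \<open>length A = n\<close> by (intro select_value_between[OF _ inputs]) (auto simp: NF_def)
  then show ?thesis
    using same_array by (intro exI[of _ "select_value tb \<alpha> A"]) simp
qed

end
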